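(* Let $f:\mathbb{R}^n\to(-\infty,+\infty]$ be a proper closed function, let $\mathcal{M}$ be a $C^1$-smooth embedded submanifold of $\mathbb{R}^n$ containing $\bar x$ with the induced metric, and suppose $f$ is $C^1$-partly smooth and prox-regular around $\bar x$ relative to $\mathcal{M}$, with $g_{\mathcal{U}}(\bar x)\in\operatorname{ri}\partial f(\bar x)$. Then for all $x\in\mathcal{M}$ near $\bar x$, $\nabla_{\mathcal{M}}f(x)=g_{\mathcal{U}}(x)$.
   Context: $\hat\partial f$ is the Fréchet and $\partial f$ the limiting subdifferential. Partial smoothness: $f$ is partly smooth at a point $x\in\mathcal M$ relative to a $C^p$ manifold $\mathcal{M}$ (for all subgradients) if: (Regularity) $\hat\partial f(z)=\partial f(z)\neq\varnothing$ for all $z\in\mathcal{M}$ near $x$; (Restricted smoothness) $f|_{\mathcal{M}}$ is $C^p$-smooth around $x$; (Sharpness) $\operatorname{par}\partial f(x)$ equals $N_x\mathcal{M}$; (Inner semicontinuity) for every $y\in\partial f(x)$ and every sequence $x_r\to x$ in $\mathcal{M}$ there exist $y_r\in\partial f(x_r)$ with $y_r\to y$. "Around $\bar x$ relative to $\mathcal M$" means at every point of $\mathcal M$ near $\bar x$ (with $p=1$). $f$ is prox-regular at $x$ for $\bar v\in\hat\partial f(x)$ if there are $\epsilon>0,\rho\ge0$ with $f(x'')\ge f(x')+\langle v,x''-x'\rangle-\frac\rho2\|x''-x'\|^2$ for all $x',x''\in B_\epsilon(x)$ and $v\in\hat\partial f(x')$ with $\|v-\bar v\|<\epsilon$, $f(x')<f(x)+\epsilon$;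 "prox-regular around $\bar x$ relative to $\mathcal M$" is taken to mean prox-regular at every point of $\mathcal M$ near $\bar x$ for each of its subgradients. For $g\in\partial f(x)$: $\mathcal{V}(x)=\operatorname{lin}(\partial f(x)-g)$, $\mathcal{U}(x)=\mathcal{V}(x)^\perp$, $g_{\mathcal U}(x)=P_{\mathcal U(x)}(g)$ (independent of $g$). $\nabla_{\mathcal M}f(x)$ is the Riemannian gradient of $f|_{\mathcal M}$. *)

theory Defs
  imports "HOL-Analysis.Analysis" "HOL-Library.Extended_Real"
begin

definition proper_fun :: "('a::euclidean_space \<Rightarrow> ereal) \<Rightarrow> bool" where
  "proper_fun f \<longleftrightarrow> (\<forall>x. f x \<noteq> -\<infinity>) \<and> (\<exists>x. f x \<noteq> \<infinity>)"

text \<open>Closed = lower semicontinuous = closed epigraph.\<close>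
definition closed_fun :: "('a::euclidean_space \<Rightarrow> ereal) \<Rightarrow> bool" where
  "closed_fun f \<longleftrightarrow> closed {(x, t::real). f x \<le> ereal t}"

definition frechet_subdiff :: "('a::euclidean_space \<Rightarrow> ereal) \<Rightarrow> 'a \<Rightarrow> 'a set" where
  "frechet_subdiff f x = {v. \<bar>f x\<bar> \<noteq> \<infinity> \<and>
     (\<forall>e>0. \<exists>d>0. \<forall>y. dist y x < d \<longrightarrow>
        f y \<ge> f x + ereal (v \<bullet> (y - x) - e * norm (y - x)))}"

definition limiting_subdiff :: "('a::euclidean_space \<Rightarrow> ereal) \<Rightarrow> 'a \<Rightarrow> 'a set" where
  "limiting_subdiff f x = {v. \<bar>f x\<bar> \<noteq> \<infinity> \<and>
     (\<exists>xs vs. xs \<longlonglongrightarrow> x \<and> (\<lambda>k. f (xs k)) \<longlonglongrightarrow> f x \<and>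
        (\<forall>k. vs k \<in> frechet_subdiff f (xs k)) \<and> vs \<longlonglongrightarrow> v)}"

text \<open>C^1 embedded submanifold of R^n: locally the zero set of finitely many
  C^1 functions F_0,...,F_{m-1} (i.e. of a C^1 map U -> R^m) whose Jacobian
  is surjective at the points of M in U.\<close>
definition C1_submanifold :: "'a::euclidean_space set \<Rightarrow> bool" where
  "C1_submanifold M \<longleftrightarrow> (\<forall>x\<in>M. \<exists>U m (F :: nat \<Rightarrow> 'a \<Rightarrow> real) (G :: nat \<Rightarrow> 'a \<Rightarrow> 'a).
      open U \<and> x \<in> U \<and>
      (\<forall>i<m. \<forall>y\<in>U. (F i has_derivative (\<lambda>h. G i y \<bullet> h)) (at y)) \<and>
      (\<forall>i<m. continuous_on U (G i)) \<and>
      M \<inter> U = {y\<in>U. \<forall>i<m. F i y = 0} \<and>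
      (\<forall>y\<in>M \<inter> U. \<forall>c :: nat \<Rightarrow> real. \<exists>h. \<forall>i<m. G i y \<bullet> h = c i))"

definition tangent_space :: "'a::euclidean_space set \<Rightarrow> 'a \<Rightarrow> 'a set" where
  "tangent_space M x = {w. \<exists>\<gamma> e. e > 0 \<and> \<gamma> 0 = x \<and> (\<forall>t. \<bar>t\<bar> < e \<longrightarrow> \<gamma> t \<in> M) \<and>
        (\<gamma> has_vector_derivative w) (at 0)}"

definition normal_space :: "'a::euclidean_space set \<Rightarrow> 'a \<Rightarrow> 'a set" where
  "normal_space M x = orthogonal_comp (tangent_space M x)"

definition is_riem_grad :: "'a::euclidean_space set \<Rightarrow> ('a \<Rightarrow> ereal) \<Rightarrow> 'a \<Rightarrow> 'a \<Rightarrow> bool" where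
  "is_riem_grad M f x v \<longleftrightarrow> v \<in> tangent_space M x \<and>
     (\<forall>\<gamma> e w. e > 0 \<longrightarrow> \<gamma> 0 = x \<longrightarrow> (\<forall>t. \<bar>t\<bar> < e \<longrightarrow> \<gamma> t \<in> M) \<longrightarrow>
        (\<gamma> has_vector_derivative w) (at 0) \<longrightarrow>
        ((\<lambda>t. real_of_ereal (f (\<gamma> t))) has_real_derivative (v \<bullet> w)) (at 0))"

definition riem_grad :: "'a::euclidean_space set \<Rightarrow> ('a \<Rightarrow> ereal) \<Rightarrow> 'a \<Rightarrow> 'a" where
  "riem_grad M f x = (THE v. is_riem_grad M f x v)"

text \<open>par S: the linear subspace parallel to the affine hull of S.\<close>
definition par :: "'a::euclidean_space set \<Rightarrow> 'a set" where
  "par S = span {a - b | a b. a \<in> S \<and> b \<in> S}"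

definition proj :: "'a::euclidean_space set \<Rightarrow> 'a \<Rightarrow> 'a" where
  "proj W v = (THE u. u \<in> W \<and> v - u \<in> orthogonal_comp W)"

definition Vsp :: "('a::euclidean_space \<Rightarrow> ereal) \<Rightarrow> 'a \<Rightarrow> 'a set" where
  "Vsp f x = span {y - (SOME g. g \<in> limiting_subdiff f x) | y. y \<in> limiting_subdiff f x}"

definition Usp :: "('a::euclidean_space \<Rightarrow> ereal) \<Rightarrow> 'a \<Rightarrow> 'a set" where
  "Usp f x = orthogonal_comp (Vsp f x)"

definition gU :: "('a::euclidean_space \<Rightarrow> ereal) \<Rightarrow> 'a \<Rightarrow> 'a" where
  "gU f x = proj (Usp f x) (SOME g. g \<in> limiting_subdiff f x)"

definition partly_smooth_at :: "('a::euclidean_space \<Rightarrow> ereal) \<Rightarrow> 'a \<Rightarrow> 'a set \<Rightarrow> bool" where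
  "partly_smooth_at f x M \<longleftrightarrow> x \<in> M \<and> C1_submanifold M \<and>
     \<comment> \<open>regularity\<close>
     (\<exists>d>0. \<forall>z\<in>M. dist z x < d \<longrightarrow>
        frechet_subdiff f z = limiting_subdiff f z \<and> limiting_subdiff f z \<noteq> {}) \<and>
     \<comment> \<open>restricted smoothness: f on M agrees near x with a C^1 function\<close>
     (\<exists>U h Dh. open U \<and> x \<in> U \<and>
        (\<forall>y\<in>U. (h has_derivative (\<lambda>v. Dh y \<bullet> v)) (at y)) \<and> continuous_on U Dh \<and>
        (\<forall>z\<in>M \<inter> U. f z = ereal (h z))) \<and>
     \<comment> \<open>sharpness\<close>
     par (limiting_subdiff f x) = normal_space M x \<and>
     \<comment> \<open>inner semicontinuity\<close>
     (\<forall>y\<in>limiting_subdiff f x. \<forall>xs. (\<forall>r. xs r \<in> M) \<longrightarrow> xs \<longlonglongrightarrow> x \<longrightarrow>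
        (\<exists>ys. (\<forall>\<^sub>F r in sequentially. ys r \<in> limiting_subdiff f (xs r)) \<and> ys \<longlonglongrightarrow> y))"

definition prox_regular_at :: "('a::euclidean_space \<Rightarrow> ereal) \<Rightarrow> 'a \<Rightarrow> 'a \<Rightarrow> bool" where
  "prox_regular_at f x vb \<longleftrightarrow> (\<exists>e>0. \<exists>\<rho>\<ge>0. \<forall>x' x'' v.
      x' \<in> ball x e \<longrightarrow> x'' \<in> ball x e \<longrightarrow> v \<in> frechet_subdiff f x' \<longrightarrow>
      norm (v - vb) < e \<longrightarrow> f x' < f x + ereal e \<longrightarrow>
      f x'' \<ge> f x' + ereal (v \<bullet> (x'' - x') - \<rho> / 2 * (norm (x'' - x'))\<^sup>2))"

end

theory Submission
  imports Defs
begin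

text \<open>Near \<open>xb\<close>, f coincides on M with a C1 function h, and sharpness identifies
  U(x) = V(x)\<bottom> with the tangent space T of M at x, so that \<open>gU f x\<close> is the projection onto T
  of a subgradient g, while the Riemannian gradient is the projection of \<nabla>h(x). By
  regularity g is a Frechet subgradient; comparing its subgradient inequality with h along
  curves in M through x gives \<langle>\<nabla>h(x) - g, w\<rangle> \<ge> 0 for every w in T, hence
  \<nabla>h(x) - g \<bottom> T and the two projections agree.\<close>

lemma proj_eqI:
  fixes W :: "'a::euclidean_space set"
  assumes W: "subspace W" and u: "u \<in> W" "v - u \<in> W\<^sup>\<bottom>"
  shows "proj W v = u"
  unfolding proj_def
proof (rule the_equality)
  show "u \<in> W \<and> v - u \<in> W\<^sup>\<bottom>" using u by blast
next
  fix u' assume u': "u' \<in> W \<and> v - u' \<in> W\<^sup>\<bottom>"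
  have "u - u' \<in> W"
    using subspace_diff[OF W] u u' by blast
  moreover have "(v - u') - (v - u) \<in> W\<^sup>\<bottom>"
    using subspace_diff[OF subspace_orthogonal_comp] u u' by blast
  then have "u - u' \<in> W\<^sup>\<bottom>" by simp
  ultimately have "u - u' = 0"
    using orthogonal_Int_0[OF W] by blast
  then show "u' = u" by simp
qed

lemma proj_in_subspace_and_orthogonal:
  fixes W :: "'a::euclidean_space set"
  assumes "subspace W"
  shows "proj W v \<in> W" "v - proj W v \<in> W\<^sup>\<bottom>"
proof -
  obtain y z where yz: "y \<in> span W" "\<And>w. w \<in> span W \<Longrightarrow> orthogonal z w" "v = y + z"
    using orthogonal_subspace_decomp_exists by blast
  have sW: "span W = W" using assms by simp
  have "y \<in> W" "v - y \<in> W\<^sup>\<bottom>"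
    using yz unfolding sW by (auto simp: orthogonal_comp_def orthogonal_commute)
  then show "proj W v \<in> W" "v - proj W v \<in> W\<^sup>\<bottom>"
    using proj_eqI[OF assms] by auto
qed

lemma proj_eq_if_diff_orthogonal:
  fixes W :: "'a::euclidean_space set"
  assumes "subspace W" "v - v' \<in> W\<^sup>\<bottom>"
  shows "proj W v = proj W v'"
proof (rule proj_eqI[OF assms(1) proj_in_subspace_and_orthogonal(1)[OF assms(1)]])
  have "v - proj W v' = (v - v') + (v' - proj W v')" by simp
  then show "v - proj W v' \<in> W\<^sup>\<bottom>"
    using assms proj_in_subspace_and_orthogonal(2)[OF assms(1)]
    by (metis subspace_add subspace_orthogonal_comp)
qed

lemma span_diffs_eq_par:
  assumes "g \<in> S"
  shows "span {y - g |y. y \<in> S} = par S"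
  unfolding par_def span_eq
proof
  show "{y - g |y. y \<in> S} \<subseteq> span {a - b |a b. a \<in> S \<and> b \<in> S}"
    using assms by (auto intro!: span_base)
  have "a - b \<in> span {y - g |y. y \<in> S}" if "a \<in> S" "b \<in> S" for a b
  proof -
    have "(a - g) - (b - g) \<in> span {y - g |y. y \<in> S}"
      using that by (intro span_diff span_base) auto
    then show ?thesis by simp
  qed
  then show "{a - b |a b. a \<in> S \<and> b \<in> S} \<subseteq> span {y - g |y. y \<in> S}" by blast
qed

lemma has_real_derivative_compose_curve:
  fixes \<gamma> :: "real \<Rightarrow> 'a::real_inner"
  assumes "(\<gamma> has_vector_derivative w) (at t)" "(h has_derivative (\<lambda>u. D \<bullet> u)) (at (\<gamma> t))"
  shows "((\<lambda>s. h (\<gamma> s)) has_real_derivative D \<bullet> w) (at t)"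
proof -
  have "((\<lambda>s. h (\<gamma> s)) has_derivative (\<lambda>s. D \<bullet> (s *\<^sub>R w))) (at t)"
    using has_derivative_compose[OF assms(1)[unfolded has_vector_derivative_def] assms(2)] .
  then show ?thesis
    by (simp add: has_field_derivative_def mult.commute[of _ "D \<bullet> w"])
qed

lemma curve_eventually_in_open:
  fixes \<gamma> :: "real \<Rightarrow> 'a::real_normed_vector"
  assumes "(\<gamma> has_vector_derivative w) (at 0)" "open U" "\<gamma> 0 \<in> U" "e > 0"
  shows "\<forall>\<^sub>F t in nhds 0. \<gamma> t \<in> U \<and> \<bar>t\<bar> < e"
proof -
  have "isCont \<gamma> 0"
    using assms(1) by (metis differentiableI_vector differentiable_imp_continuous_within)
  then have "\<forall>\<^sub>F t in nhds 0. \<gamma> t \<in> U"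
    using assms(2,3) unfolding isCont_def tendsto_at_iff_tendsto_nhds
    by (metis topological_tendstoD)
  moreover have "\<forall>\<^sub>F t in nhds 0. \<bar>t\<bar> < e"
    using eventually_nhds_in_open[of "{-e<..<e}" 0] assms(4)
    by (auto elim!: eventually_mono simp: abs_less_iff)
  ultimately show ?thesis by (rule eventually_conj)
qed

lemma has_vector_derivative_imp_norm_diff_le:
  fixes \<gamma> :: "real \<Rightarrow> 'a::real_normed_vector"
  assumes "(\<gamma> has_vector_derivative w) (at t0)"
  obtains d where "d > 0" "\<And>t. \<bar>t - t0\<bar> < d \<Longrightarrow> norm (\<gamma> t - \<gamma> t0) \<le> (norm w + 1) * \<bar>t - t0\<bar>"
proof -
  obtain d where d: "d > 0"
    "\<And>t. norm (t - t0) < d \<Longrightarrow> norm (\<gamma> t - \<gamma> t0 - (t - t0) *\<^sub>R w) \<le> 1 * norm (t - t0)"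
    using assms unfolding has_vector_derivative_def has_derivative_at_alt
    by (meson zero_less_one)
  have "norm (\<gamma> t - \<gamma> t0) \<le> (norm w + 1) * \<bar>t - t0\<bar>" if "\<bar>t - t0\<bar> < d" for t
  proof -
    have "norm (\<gamma> t - \<gamma> t0) \<le> norm ((t - t0) *\<^sub>R w) + norm (\<gamma> t - \<gamma> t0 - (t - t0) *\<^sub>R w)"
      by (metis add.commute diff_add_cancel norm_triangle_ineq)
    also have "\<dots> \<le> \<bar>t - t0\<bar> * norm w + \<bar>t - t0\<bar>"
      using d(2)[of t] that by simp
    finally show ?thesis by (simp add: algebra_simps)
  qed
  with d(1) show thesis by (rule that)
qed

lemma DERIV_nonneg_if_right_lower_bounds:
  fixes \<phi> :: "real \<Rightarrow> real"
  assumes "DERIV \<phi> x :> a"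
    and "\<And>\<epsilon>. \<epsilon> > 0 \<Longrightarrow> \<forall>\<^sub>F t in at_right x. \<phi> x - \<epsilon> * (t - x) \<le> \<phi> t"
  shows "0 \<le> a"
proof (rule ccontr)
  assume "\<not> 0 \<le> a"
  then have neg: "a - a / 2 < 0" by simp
  then have lower: "\<forall>\<^sub>F t in at_right x. \<phi> x - (- a / 2) * (t - x) \<le> \<phi> t"
    using assms(2)[of "- a / 2"] by simp
  have "DERIV (\<lambda>t. \<phi> t - a / 2 * (t - x)) x :> a - a / 2"
    by (auto intro!: derivative_eq_intros assms(1))
  from DERIV_neg_dec_right[OF this neg] obtain d where "d > 0"
    and dec: "\<forall>h>0. h < d \<longrightarrow> \<phi> (x + h) - a / 2 * (x + h - x) < \<phi> x - a / 2 * (x - x)"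
    by blast
  have "\<forall>\<^sub>F t in at_right x. t \<in> {x<..<x + d}"
    using eventually_at_right_real[of x "x + d"] \<open>d > 0\<close> by simp
  with lower have "\<forall>\<^sub>F t in at_right x. False"
  proof (eventually_elim)
    case (elim t)
    then show False using dec[rule_format, of "t - x"] by (simp add: algebra_simps)
  qed
  then show False by simp
qed

lemma tangent_space_subset_kernel:
  fixes M U :: "'a::euclidean_space set"
  assumes "open U" "x \<in> U"
    and der: "\<forall>i<m. \<forall>y\<in>U. (F i has_derivative (\<lambda>h. G i y \<bullet> h)) (at y)"
    and level: "M \<inter> U = {y\<in>U. \<forall>i<m. F i y = 0}"
    and "w \<in> tangent_space M x" "i < m"
  shows "G i x \<bullet> w = 0"
proof -
  obtain \<gamma> e where e: "e > 0" "\<gamma> 0 = x" "\<forall>t. \<bar>t\<bar> < e \<longrightarrow> \<gamma> t \<in> M"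
     and \<gamma>': "(\<gamma> has_vector_derivative w) (at 0)"
    using assms(5) unfolding tangent_space_def by blast
  have "\<forall>\<^sub>F t in nhds 0. \<gamma> t \<in> U \<and> \<bar>t\<bar> < e"
    using curve_eventually_in_open[OF \<gamma>' assms(1)] e assms(2) by simp
  then have ev: "\<forall>\<^sub>F t in nhds 0. F i (\<gamma> t) = 0"
    by eventually_elim (use e(3) level \<open>i < m\<close> in blast)
  have "DERIV (\<lambda>t. F i (\<gamma> t)) 0 :> G i x \<bullet> w"
    using has_real_derivative_compose_curve[OF \<gamma>'] der \<open>i < m\<close> assms(2) e(2) by simp
  then have "DERIV (\<lambda>t. 0) 0 :> G i x \<bullet> w"
    using DERIV_cong_ev[OF refl ev refl] by simp
  then show ?thesis using DERIV_const DERIV_unique by blast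
qed

lemma local_inverse_of_identity_derivative:
  fixes \<Phi> :: "'a::euclidean_space \<Rightarrow> 'a"
  assumes "open U" "x \<in> U"
    and "\<And>y. y \<in> U \<Longrightarrow> (\<Phi> has_derivative blinfun_apply (\<Phi>' y)) (at y)"
    and "continuous_on U \<Phi>'" "\<Phi>' x = id_blinfun"
  obtains \<psi> V where "open V" "\<Phi> x \<in> V" "\<psi> (\<Phi> x) = x" "(\<psi> has_derivative id) (at (\<Phi> x))"
    "\<And>z. z \<in> V \<Longrightarrow> \<psi> z \<in> U \<and> \<Phi> (\<psi> z) = z"
proof -
  have invf: "id_blinfun o\<^sub>L \<Phi>' x = id_blinfun" by (rule blinfun_eqI) (simp add: assms(5))
  obtain U' V \<psi> \<psi>' where "open U'" "U' \<subseteq> U" "x \<in> U'" "open V" "\<Phi> x \<in> V"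
      and hom: "homeomorphism U' V \<Phi> \<psi>"
      and \<psi>': "\<And>y. y \<in> V \<Longrightarrow> (\<psi> has_derivative (\<psi>' y)) (at y)"
        "\<And>y. y \<in> V \<Longrightarrow> \<psi>' y = inv (blinfun_apply (\<Phi>'(\<psi> y)))"
    by (rule inverse_function_theorem[OF assms(1,3,4,2) invf]; (assumption | (rule that; assumption)))
  have \<psi>x: "\<psi> (\<Phi> x) = x"
    using hom \<open>x \<in> U'\<close> by (simp add: homeomorphism_apply1)
  have "(\<psi> has_derivative id) (at (\<Phi> x))"
    using \<psi>'[OF \<open>\<Phi> x \<in> V\<close>] \<psi>x assms(5) by (simp add: id_def[symmetric])
  moreover have "\<psi> z \<in> U \<and> \<Phi> (\<psi> z) = z" if "z \<in> V" for z
    using hom that \<open>U' \<subseteq> U\<close> unfolding homeomorphism_def by auto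
  ultimately show thesis
    using that \<open>open V\<close> \<open>\<Phi> x \<in> V\<close> \<psi>x by blast
qed

lemma dual_family_of_surjective_inner:
  fixes G :: "nat \<Rightarrow> 'a::real_inner"
  assumes "\<forall>c::nat \<Rightarrow> real. \<exists>h. \<forall>i<m. G i \<bullet> h = c i"
  obtains u where "\<And>i j. j < m \<Longrightarrow> G j \<bullet> u i = (if j = i then 1 else 0)"
proof -
  have "\<forall>i. \<exists>h. \<forall>j<m. G j \<bullet> h = (if j = i then 1 else 0)"
  proof
    fix i
    show "\<exists>h. \<forall>j<m. G j \<bullet> h = (if j = i then 1 else 0)"
      using assms by (rule allE[where x="\<lambda>j. if j = i then 1 else 0"])
  qed
  then obtain u where "\<forall>i. \<forall>j<m. G j \<bullet> u i = (if j = i then 1 else 0)"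
    by (rule choice[THEN exE])
  with that show thesis by blast
qed

lemma level_set_local_parametrization:
  fixes F :: "nat \<Rightarrow> 'a::euclidean_space \<Rightarrow> real"
  assumes "open U" "x \<in> U"
    and der: "\<forall>i<m. \<forall>y\<in>U. (F i has_derivative (\<lambda>h. G i y \<bullet> h)) (at y)"
    and cont: "\<forall>i<m. continuous_on U (G i)"
    and zero: "\<forall>i<m. F i x = 0"
    and surj: "\<forall>c::nat \<Rightarrow> real. \<exists>h. \<forall>i<m. G i x \<bullet> h = c i"
  obtains \<psi> V where "open V" "0 \<in> V" "\<psi> 0 = x" "(\<psi> has_derivative id) (at 0)"
    "\<And>z. z \<in> V \<Longrightarrow> \<psi> z \<in> U" "\<And>z j. z \<in> V \<Longrightarrow> j < m \<Longrightarrow> F j (\<psi> z) = G j x \<bullet> z"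
proof -
  obtain u where u: "\<And>i j. j < m \<Longrightarrow> G j x \<bullet> u i = (if j = i then 1 else 0)"
    using dual_family_of_surjective_inner[OF surj] by blast
  \<comment> \<open>\<open>\<Phi>\<close> has derivative the identity at x and satisfies \<open>G j x \<bullet> \<Phi> y = F j y\<close>, so its
    local inverse maps the common kernel of the \<open>G j x\<close> into M.\<close>
  define \<Phi> where "\<Phi> y = (y - x) + (\<Sum>i<m. (F i y - G i x \<bullet> (y - x)) *\<^sub>R u i)" for y
  define \<Phi>' where "\<Phi>' y = id_blinfun +
    (\<Sum>i<m. blinfun_scaleR_left (u i) o\<^sub>L blinfun_inner_left (G i y - G i x))" for y
  have \<Phi>'_apply: "blinfun_apply (\<Phi>' y) = (\<lambda>h. h + (\<Sum>i<m. (G i y \<bullet> h - G i x \<bullet> h) *\<^sub>R u i))" for y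
    by (auto simp: \<Phi>'_def blinfun.add_left blinfun.sum_left inner_diff_right inner_commute)
  have d\<Phi>: "(\<Phi> has_derivative blinfun_apply (\<Phi>' y)) (at y)" if "y \<in> U" for y
    unfolding \<Phi>_def \<Phi>'_apply
    using der that by (auto intro!: derivative_eq_intros)
  have c\<Phi>': "continuous_on U \<Phi>'"
    unfolding \<Phi>'_def using cont by (auto intro!: continuous_intros)
  have \<Phi>'x: "\<Phi>' x = id_blinfun"
    by (rule blinfun_eqI) (simp add: \<Phi>'_apply)
  obtain \<psi> V where V: "open V" "\<Phi> x \<in> V" "\<psi> (\<Phi> x) = x" "(\<psi> has_derivative id) (at (\<Phi> x))"
      and inv: "\<And>z. z \<in> V \<Longrightarrow> \<psi> z \<in> U \<and> \<Phi> (\<psi> z) = z"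
    by (rule local_inverse_of_identity_derivative[OF assms(1,2) d\<Phi> c\<Phi>' \<Phi>'x];
        (assumption | (rule that; assumption)))
  have straight: "G j x \<bullet> \<Phi> y = F j y" if "j < m" for j y
  proof -
    have "G j x \<bullet> \<Phi> y = G j x \<bullet> (y - x) + (\<Sum>i<m. (F i y - G i x \<bullet> (y - x)) * (G j x \<bullet> u i))"
      by (simp add: \<Phi>_def inner_add_right inner_sum_right)
    also have "\<dots> = G j x \<bullet> (y - x) + (\<Sum>i<m. if i = j then F i y - G i x \<bullet> (y - x) else 0)"
      using u that by (intro arg_cong2[where f="(+)"] refl sum.cong) auto
    also have "\<dots> = F j y"
      using that by simp
    finally show ?thesis .
  qed
  have "\<Phi> x = 0" by (simp add: \<Phi>_def zero)
  with V have V0: "0 \<in> V" "\<psi> 0 = x" "(\<psi> has_derivative id) (at 0)" by simp_all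
  have "F j (\<psi> z) = G j x \<bullet> z" if "z \<in> V" "j < m" for z j
    using straight[of j "\<psi> z"] inv[OF that(1)] that(2) by simp
  then show thesis
    using that[OF V(1) V0] inv by blast
qed

lemma kernel_subset_tangent_space:
  fixes M U :: "'a::euclidean_space set"
  assumes "open U" "x \<in> U" "x \<in> M"
    and der: "\<forall>i<m. \<forall>y\<in>U. (F i has_derivative (\<lambda>h. G i y \<bullet> h)) (at y)"
    and cont: "\<forall>i<m. continuous_on U (G i)"
    and level: "M \<inter> U = {y\<in>U. \<forall>i<m. F i y = 0}"
    and surj: "\<forall>c::nat \<Rightarrow> real. \<exists>h. \<forall>i<m. G i x \<bullet> h = c i"
    and w: "\<forall>i<m. G i x \<bullet> w = 0"
  shows "w \<in> tangent_space M x"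
proof -
  have zero: "\<forall>i<m. F i x = 0" using level assms(2,3) by blast
  obtain \<psi> V where V: "open V" "0 \<in> V" "\<psi> 0 = x" "(\<psi> has_derivative id) (at 0)"
      and \<psi>U: "\<And>z. z \<in> V \<Longrightarrow> \<psi> z \<in> U"
      and \<psi>F: "\<And>z j. z \<in> V \<Longrightarrow> j < m \<Longrightarrow> F j (\<psi> z) = G j x \<bullet> z"
    by (rule level_set_local_parametrization[OF assms(1,2) der cont zero surj];
        (assumption | (rule that; assumption)))
  obtain r where "r > 0" "ball 0 r \<subseteq> V" using V(1,2) open_contains_ball by blast
  define e where "e = r / (norm w + 1)"
  have nw: "norm w + 1 > 0" by (simp add: add_nonneg_pos)
  have "e > 0" using \<open>r > 0\<close> nw by (simp add: e_def)
  have "\<psi> (t *\<^sub>R w) \<in> M" if "\<bar>t\<bar> < e" for t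
  proof -
    have "\<bar>t\<bar> * norm w \<le> \<bar>t\<bar> * (norm w + 1)" by (simp add: mult_left_mono)
    also have "\<dots> < r"
      using that nw by (simp add: e_def pos_less_divide_eq)
    finally have "t *\<^sub>R w \<in> V" using \<open>ball 0 r \<subseteq> V\<close> by auto
    then show ?thesis using \<psi>U \<psi>F w level by auto
  qed
  moreover have "((\<lambda>t. \<psi> (t *\<^sub>R w)) has_vector_derivative w) (at 0)"
    using has_derivative_compose[of "\<lambda>t. t *\<^sub>R w" "\<lambda>t. t *\<^sub>R w" 0 UNIV \<psi> id] V(4)
    by (simp add: has_vector_derivative_def has_derivative_scaleR_left)
  ultimately show ?thesis
    unfolding tangent_space_def using \<open>e > 0\<close> V(3)
    by (intro CollectI exI[of _ "\<lambda>t. \<psi> (t *\<^sub>R w)"] exI[of _ e]) simp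
qed

lemma subspace_tangent_space:
  fixes M :: "'a::euclidean_space set"
  assumes "C1_submanifold M" "x \<in> M"
  shows "subspace (tangent_space M x)"
proof -
  obtain U m F G where U: "open U" "x \<in> U"
      and der: "\<forall>i<m. \<forall>y\<in>U. (F i has_derivative (\<lambda>h. G i y \<bullet> h)) (at y)"
      and cont: "\<forall>i<m. continuous_on U (G i)"
      and level: "M \<inter> U = {y\<in>U. \<forall>i<m. F i y = 0}"
      and surj: "\<forall>y\<in>M \<inter> U. \<forall>c :: nat \<Rightarrow> real. \<exists>h. \<forall>i<m. G i y \<bullet> h = c i"
    using assms(1)[unfolded C1_submanifold_def, rule_format, OF assms(2)] by blast
  have surj_at_x: "\<forall>c :: nat \<Rightarrow> real. \<exists>h. \<forall>i<m. G i x \<bullet> h = c i"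
    using surj U(2) assms(2) by blast
  have "tangent_space M x = {w. \<forall>i<m. G i x \<bullet> w = 0}"
  proof
    show "tangent_space M x \<subseteq> {w. \<forall>i<m. G i x \<bullet> w = 0}"
      using tangent_space_subset_kernel[OF U der level] by blast
    show "{w. \<forall>i<m. G i x \<bullet> w = 0} \<subseteq> tangent_space M x"
      using kernel_subset_tangent_space[OF U assms(2) der cont level surj_at_x] by blast
  qed
  moreover have "subspace {w. \<forall>i<m. G i x \<bullet> w = 0}"
    unfolding subspace_def by (auto simp: inner_add_right)
  ultimately show ?thesis by simp
qed

lemma frechet_subgradient_tangent_inequality:
  fixes f :: "'a::euclidean_space \<Rightarrow> ereal"
  assumes v: "v \<in> frechet_subdiff f x" and U: "open U" "x \<in> U"
    and dh: "(h has_derivative (\<lambda>u. D \<bullet> u)) (at x)"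
    and fh: "\<forall>z\<in>M \<inter> U. f z = ereal (h z)"
    and w: "w \<in> tangent_space M x"
  shows "0 \<le> (D - v) \<bullet> w"
proof -
  obtain \<gamma> e where e: "e > 0" "\<gamma> 0 = x" "\<forall>t. \<bar>t\<bar> < e \<longrightarrow> \<gamma> t \<in> M"
     and \<gamma>': "(\<gamma> has_vector_derivative w) (at 0)"
    using w unfolding tangent_space_def by blast
  define \<phi> where "\<phi> t = h (\<gamma> t) - v \<bullet> \<gamma> t" for t
  have "DERIV \<phi> 0 :> D \<bullet> w - v \<bullet> w"
    unfolding \<phi>_def using dh e(2)
    by (intro DERIV_diff has_real_derivative_compose_curve[OF \<gamma>'])
      (auto intro: has_derivative_inner_right[OF has_derivative_ident])
  then have "DERIV \<phi> 0 :> (D - v) \<bullet> w" by (simp add: inner_diff_left)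
  then show ?thesis
  proof (rule DERIV_nonneg_if_right_lower_bounds)
    fix \<epsilon> :: real assume "\<epsilon> > 0"
    obtain d where "d > 0" and lip: "\<And>t. \<bar>t\<bar> < d \<Longrightarrow> norm (\<gamma> t - x) \<le> (norm w + 1) * \<bar>t\<bar>"
      using has_vector_derivative_imp_norm_diff_le[OF \<gamma>'] e(2) by auto
    have nw: "norm w + 1 > 0" by (simp add: add_nonneg_pos)
    define \<epsilon>' where "\<epsilon>' = \<epsilon> / (norm w + 1)"
    have "\<epsilon>' > 0" using \<open>\<epsilon> > 0\<close> nw by (simp add: \<epsilon>'_def)
    then obtain \<delta> where "\<delta> > 0"
      and sub: "\<And>y. dist y x < \<delta> \<Longrightarrow> f y \<ge> f x + ereal (v \<bullet> (y - x) - \<epsilon>' * norm (y - x))"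
      using v unfolding frechet_subdiff_def by blast
    have "\<forall>\<^sub>F t in nhds 0. \<gamma> t \<in> U \<inter> ball x \<delta> \<and> \<bar>t\<bar> < min e d"
      using curve_eventually_in_open[OF \<gamma>' open_Int[OF U(1) open_ball], where e = "min e d"]
        U(2) e(1,2) \<open>\<delta> > 0\<close> \<open>d > 0\<close>
      by simp
    then show "\<forall>\<^sub>F t in at_right 0. \<phi> 0 - \<epsilon> * (t - 0) \<le> \<phi> t"
      unfolding eventually_at_filter
    proof (rule eventually_mono, intro impI)
      fix t :: real
      assume t: "\<gamma> t \<in> U \<inter> ball x \<delta> \<and> \<bar>t\<bar> < min e d" and "t \<in> {0<..}"
      have "x \<in> M" "\<gamma> t \<in> M" using e t by force+
      then have "h (\<gamma> t) \<ge> h x + (v \<bullet> (\<gamma> t - x) - \<epsilon>' * norm (\<gamma> t - x))"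
        using sub[of "\<gamma> t"] fh t U by (simp add: dist_commute)
      moreover have "\<epsilon>' * norm (\<gamma> t - x) \<le> \<epsilon> * t"
        using mult_left_mono[OF lip, of t \<epsilon>'] t \<open>t \<in> {0<..}\<close> \<open>\<epsilon>' > 0\<close> nw
        by (simp add: \<epsilon>'_def)
      ultimately show "\<phi> 0 - \<epsilon> * (t - 0) \<le> \<phi> t"
        by (simp add: \<phi>_def e(2) inner_diff_right)
    qed
  qed
qed

lemma gradient_minus_frechet_subgradient_orthogonal:
  fixes f :: "'a::euclidean_space \<Rightarrow> ereal"
  assumes "subspace (tangent_space M x)" "v \<in> frechet_subdiff f x" "open U" "x \<in> U"
    and "(h has_derivative (\<lambda>u. D \<bullet> u)) (at x)" "\<forall>z\<in>M \<inter> U. f z = ereal (h z)"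
  shows "D - v \<in> (tangent_space M x)\<^sup>\<bottom>"
  unfolding orthogonal_comp_def orthogonal_def
proof (intro CollectI ballI)
  fix w assume "w \<in> tangent_space M x"
  moreover from this have "- w \<in> tangent_space M x" using assms(1) by (simp add: subspace_neg)
  ultimately have "0 \<le> (D - v) \<bullet> w" "0 \<le> (D - v) \<bullet> - w"
    using frechet_subgradient_tangent_inequality[OF assms(2-6)] by blast+
  then show "w \<bullet> (D - v) = 0" by (simp add: inner_commute)
qed

lemma is_riem_grad_of_restricted_derivative:
  fixes f :: "'a::euclidean_space \<Rightarrow> ereal"
  assumes "open U" "x \<in> U"
    and dh: "(h has_derivative (\<lambda>u. D \<bullet> u)) (at x)"
    and fh: "\<forall>z\<in>M \<inter> U. f z = ereal (h z)"
    and p: "p \<in> tangent_space M x" "D - p \<in> (tangent_space M x)\<^sup>\<bottom>"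
  shows "is_riem_grad M f x p"
  unfolding is_riem_grad_def
proof (intro conjI allI impI)
  show "p \<in> tangent_space M x" by (fact p(1))
  fix \<gamma> e w
  assume e: "(e::real) > 0" "\<gamma> 0 = x" "\<forall>t. \<bar>t\<bar> < e \<longrightarrow> \<gamma> t \<in> M"
    and \<gamma>': "(\<gamma> has_vector_derivative w) (at 0)"
  have "w \<in> tangent_space M x" unfolding tangent_space_def using e \<gamma>' by blast
  then have "w \<bullet> (D - p) = 0"
    using p(2) unfolding orthogonal_comp_def orthogonal_def by blast
  then have "D \<bullet> w = p \<bullet> w" by (simp add: inner_diff_right inner_commute)
  moreover have "DERIV (\<lambda>t. h (\<gamma> t)) 0 :> D \<bullet> w"
    using has_real_derivative_compose_curve[OF \<gamma>'] dh e(2) by simp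
  moreover have "\<forall>\<^sub>F t in nhds 0. \<gamma> t \<in> U \<and> \<bar>t\<bar> < e"
    using curve_eventually_in_open[OF \<gamma>' assms(1)] e assms(2) by simp
  then have ev: "\<forall>\<^sub>F t in nhds 0. real_of_ereal (f (\<gamma> t)) = h (\<gamma> t)"
    by eventually_elim (use e(3) fh in simp)
  ultimately show "((\<lambda>t. real_of_ereal (f (\<gamma> t))) has_real_derivative p \<bullet> w) (at 0)"
    using DERIV_cong_ev[OF refl ev refl] by simp
qed

lemma riem_grad_eqI:
  assumes "subspace (tangent_space M x)" and p: "is_riem_grad M f x p"
  shows "riem_grad M f x = p"
  unfolding riem_grad_def
proof (rule the_equality)
  show "is_riem_grad M f x p" by (fact p)
next
  fix q assume q: "is_riem_grad M f x q"
  have "q - p \<in> tangent_space M x"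
    using p q assms(1) unfolding is_riem_grad_def by (simp add: subspace_diff)
  then obtain \<gamma> e where "e > 0" "\<gamma> 0 = x" "\<forall>t. \<bar>t\<bar> < e \<longrightarrow> \<gamma> t \<in> M"
      and "(\<gamma> has_vector_derivative (q - p)) (at 0)"
    unfolding tangent_space_def by blast
  then have "((\<lambda>t. real_of_ereal (f (\<gamma> t))) has_real_derivative q \<bullet> (q - p)) (at 0)"
      "((\<lambda>t. real_of_ereal (f (\<gamma> t))) has_real_derivative p \<bullet> (q - p)) (at 0)"
    using p q unfolding is_riem_grad_def by blast+
  then have "q \<bullet> (q - p) = p \<bullet> (q - p)" by (rule DERIV_unique)
  then have "(q - p) \<bullet> (q - p) = 0" by (simp add: inner_diff_left)
  then show "q = p" by simp
qed

lemma partly_smooth_at_regularity: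
  assumes "partly_smooth_at f x M"
  shows "frechet_subdiff f x = limiting_subdiff f x" "limiting_subdiff f x \<noteq> {}"
proof -
  obtain d where "d > 0" and "\<forall>z\<in>M. dist z x < d \<longrightarrow>
      frechet_subdiff f z = limiting_subdiff f z \<and> limiting_subdiff f z \<noteq> {}"
    using assms unfolding partly_smooth_at_def by blast
  moreover have "x \<in> M" using assms unfolding partly_smooth_at_def by blast
  ultimately show "frechet_subdiff f x = limiting_subdiff f x" "limiting_subdiff f x \<noteq> {}"
    by auto
qed

lemma Usp_eq_tangent_space:
  assumes "partly_smooth_at f x M"
  shows "Usp f x = tangent_space M x"
proof -
  have T: "subspace (tangent_space M x)"
    using assms subspace_tangent_space unfolding partly_smooth_at_def by blast
  have sharp: "par (limiting_subdiff f x) = normal_space M x"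
    using assms unfolding partly_smooth_at_def by blast
  have "(SOME g. g \<in> limiting_subdiff f x) \<in> limiting_subdiff f x"
    using partly_smooth_at_regularity(2)[OF assms] by (simp add: some_in_eq)
  then have "Vsp f x = normal_space M x"
    unfolding Vsp_def sharp[symmetric] by (rule span_diffs_eq_par)
  then show ?thesis
    unfolding Usp_def normal_space_def by (simp add: orthogonal_comp_self[OF T])
qed

lemma riem_grad_eq_gU_if_partly_smooth:
  assumes "partly_smooth_at f x M"
  shows "riem_grad M f x = gU f x"
proof -
  let ?T = "tangent_space M x"
  define g where "g = (SOME g. g \<in> limiting_subdiff f x)"
  have T: "subspace ?T"
    using assms subspace_tangent_space unfolding partly_smooth_at_def by blast
  have g: "g \<in> frechet_subdiff f x"
    using partly_smooth_at_regularity[OF assms] unfolding g_def by (simp add: some_in_eq)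
  obtain U h Dh where U: "open U" "x \<in> U"
      and dh: "(h has_derivative (\<lambda>u. Dh x \<bullet> u)) (at x)"
      and fh: "\<forall>z\<in>M \<inter> U. f z = ereal (h z)"
    using assms unfolding partly_smooth_at_def by blast
  have "gU f x = proj ?T g"
    unfolding gU_def Usp_eq_tangent_space[OF assms] g_def ..
  also have "\<dots> = proj ?T (Dh x)"
    using proj_eq_if_diff_orthogonal[OF T gradient_minus_frechet_subgradient_orthogonal[OF T g U dh fh]]
    by simp
  also have "\<dots> = riem_grad M f x"
    using riem_grad_eqI[OF T is_riem_grad_of_restricted_derivative[OF U dh fh
      proj_in_subspace_and_orthogonal[OF T]]] by simp
  finally show ?thesis by simp
qed

theorem proposition5:
  fixes f :: "'a::euclidean_space \<Rightarrow> ereal" and M :: "'a set" and xb :: 'a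
  assumes "proper_fun f" and "closed_fun f"
    and "C1_submanifold M" and "xb \<in> M"
    and "\<exists>d>0. \<forall>z\<in>M. dist z xb < d \<longrightarrow> partly_smooth_at f z M"
    and "\<exists>d>0. \<forall>z\<in>M. dist z xb < d \<longrightarrow> (\<forall>v\<in>frechet_subdiff f z. prox_regular_at f z v)"
    and "gU f xb \<in> rel_interior (limiting_subdiff f xb)"
  shows "\<exists>d>0. \<forall>x\<in>M. dist x xb < d \<longrightarrow> riem_grad M f x = gU f x"
  using assms(5) riem_grad_eq_gU_if_partly_smooth by blast

end
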